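(* Let $\mathcal{M}=(M_i\colon i\in K)$ be a tight family of matroids on a common ground set $E$. Then every covering $(R_i\colon i\in K)$ of $\mathcal{M}$ is a partitioning of $\mathcal{M}$, i.e. the sets $R_i$ are pairwise disjoint, their union is $E$, and each $R_i$ is a base of $M_i$.
   Context: Matroids here are possibly infinite (given by independence axioms: $\emptyset$ independent, subsets of independent sets independent, the augmentation axiom relative to maximal independent sets, and that every independent subset of any $X\subseteq E$ extends to a maximal independent subset of $X$). Bases are maximal independent sets; circuits minimal dependent sets; $X$ spans $e$ if $e\in X$ or some circuit $C\ni e$ has $C\setminus\{e\}\subseteq X$; $S$ is spanning if it spans all of $E$. A covering of $\mathcal{M}$ is a family $(R_i\colon i\in K)$ with $R_i$ independent in $M_i$ and $\bigcup_i R_i=E$. The family $\mathcal{M}$ is tight if it admits a covering and for every covering $(R_i\colon i\in K)$ each $R_i$ is spanning in $M_i$. *)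

theory Defs
  imports Main
begin

text \<open>A (possibly infinite) matroid on ground set E, given by its independence
predicate (independence axioms of Bruhn et al.).\<close>

definition maximal_indep_in :: "('a set \<Rightarrow> bool) \<Rightarrow> 'a set \<Rightarrow> 'a set \<Rightarrow> bool" where
  "maximal_indep_in indep X I \<longleftrightarrow>
     I \<subseteq> X \<and> indep I \<and> (\<forall>J. I \<subseteq> J \<and> J \<subseteq> X \<and> indep J \<longrightarrow> J = I)"

definition matroid :: "'a set \<Rightarrow> ('a set \<Rightarrow> bool) \<Rightarrow> bool" where
  "matroid E indep \<longleftrightarrow>
     (\<forall>I. indep I \<longrightarrow> I \<subseteq> E) \<and>
     indep {} \<and>
     (\<forall>I J. indep J \<and> I \<subseteq> J \<longrightarrow> indep I) \<and>
     (\<forall>I B. indep I \<and> \<not> maximal_indep_in indep E I \<and> maximal_indep_in indep E B \<longrightarrow>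
        (\<exists>x \<in> B - I. indep (insert x I))) \<and>
     (\<forall>X I. X \<subseteq> E \<and> I \<subseteq> X \<and> indep I \<longrightarrow>
        (\<exists>J. I \<subseteq> J \<and> maximal_indep_in indep X J))"

definition base :: "'a set \<Rightarrow> ('a set \<Rightarrow> bool) \<Rightarrow> 'a set \<Rightarrow> bool" where
  "base E indep B \<longleftrightarrow> maximal_indep_in indep E B"

definition circuit :: "'a set \<Rightarrow> ('a set \<Rightarrow> bool) \<Rightarrow> 'a set \<Rightarrow> bool" where
  "circuit E indep C \<longleftrightarrow> C \<subseteq> E \<and> \<not> indep C \<and> (\<forall>D. D \<subset> C \<longrightarrow> indep D)"

definition spans :: "'a set \<Rightarrow> ('a set \<Rightarrow> bool) \<Rightarrow> 'a set \<Rightarrow> 'a \<Rightarrow> bool" where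
  "spans E indep X e \<longleftrightarrow> e \<in> X \<or> (\<exists>C. circuit E indep C \<and> e \<in> C \<and> C - {e} \<subseteq> X)"

definition spanning :: "'a set \<Rightarrow> ('a set \<Rightarrow> bool) \<Rightarrow> 'a set \<Rightarrow> bool" where
  "spanning E indep S \<longleftrightarrow> (\<forall>e \<in> E. spans E indep S e)"

definition covering :: "'a set \<Rightarrow> 'k set \<Rightarrow> ('k \<Rightarrow> 'a set \<Rightarrow> bool) \<Rightarrow> ('k \<Rightarrow> 'a set) \<Rightarrow> bool" where
  "covering E K M R \<longleftrightarrow> (\<forall>i \<in> K. M i (R i)) \<and> (\<Union>i \<in> K. R i) = E"

definition tight :: "'a set \<Rightarrow> 'k set \<Rightarrow> ('k \<Rightarrow> 'a set \<Rightarrow> bool) \<Rightarrow> bool" where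
  "tight E K M \<longleftrightarrow> (\<exists>R. covering E K M R) \<and>
     (\<forall>R. covering E K M R \<longrightarrow> (\<forall>i \<in> K. spanning E (M i) (R i)))"

end

theory Submission
  imports Defs
begin

text \<open>If some element \<open>e\<close> lay
  in two sets \<open>R i\<close> and \<open>R j\<close>, deleting it from \<open>R i\<close> would still give a covering, so
  \<open>R i - {e}\<close> would span \<open>e\<close>; the spanning circuit would then lie in the independent set
  \<open>R i\<close>. The same circuit argument shows that an independent spanning set is a base.\<close>

lemma matroid_indep_subset:
  assumes "matroid E indep" "indep J" "I \<subseteq> J"
  shows "indep I"
  using assms unfolding matroid_def by (metis (no_types))

lemma matroid_indep_subset_ground:
  assumes "matroid E indep" "indep I"
  shows "I \<subseteq> E"
  using assms unfolding matroid_def by (metis (no_types))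

lemma indep_not_spans:
  assumes m: "matroid E indep" and J: "indep J" "e \<in> J" and X: "X \<subseteq> J - {e}"
  shows "\<not> spans E indep X e"
proof
  assume "spans E indep X e"
  then obtain C where C: "circuit E indep C" "e \<in> C" "C - {e} \<subseteq> X"
    using X unfolding spans_def by blast
  then have "C \<subseteq> J" using X J by blast
  then have "indep C" using matroid_indep_subset[OF m J(1)] by blast
  with C show False unfolding circuit_def by blast
qed

lemma indep_spanning_imp_base:
  assumes m: "matroid E indep" and I: "indep I" and s: "spanning E indep I"
  shows "base E indep I"
proof -
  have "J = I" if IJ: "I \<subseteq> J" "J \<subseteq> E" "indep J" for J
  proof (rule ccontr)
    assume "J \<noteq> I"
    then obtain e where e: "e \<in> J" "e \<notin> I" using IJ by blast
    then have "spans E indep I e" using s IJ unfolding spanning_def by blast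
    moreover have "\<not> spans E indep I e"
      using indep_not_spans[OF m IJ(3) e(1)] IJ(1) e(2) by blast
    ultimately show False by contradiction
  qed
  then show ?thesis
    using I matroid_indep_subset_ground[OF m I] unfolding base_def maximal_indep_in_def by blast
qed

lemma covering_delete_duplicate:
  assumes m: "\<forall>i \<in> K. matroid E (M i)" and R: "covering E K M R"
    and ij: "i \<in> K" "j \<in> K" "i \<noteq> j" and e: "e \<in> R j"
  shows "covering E K M (R(i := R i - {e}))"
proof -
  have "M i (R i)" using R ij(1) unfolding covering_def by blast
  then have "M i (R i - {e})" using m ij(1) matroid_indep_subset by blast
  moreover have "(\<Union>k \<in> K. (R(i := R i - {e})) k) = (\<Union>k \<in> K. R k)"
    using e ij by auto
  ultimately show ?thesis using R unfolding covering_def by auto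
qed

lemma tight_covering_spanning:
  assumes "tight E K M" "covering E K M R" "i \<in> K"
  shows "spanning E (M i) (R i)"
  using assms unfolding tight_def by blast

lemma tight_covering_disjoint:
  assumes m: "\<forall>i \<in> K. matroid E (M i)" and t: "tight E K M" and R: "covering E K M R"
    and ij: "i \<in> K" "j \<in> K" "i \<noteq> j"
  shows "R i \<inter> R j = {}"
proof (rule ccontr)
  assume "R i \<inter> R j \<noteq> {}"
  then obtain e where e: "e \<in> R i" "e \<in> R j" by blast
  have "spanning E (M i) (R i - {e})"
    using tight_covering_spanning[OF t covering_delete_duplicate[OF m R ij e(2)] ij(1)] by simp
  moreover have "e \<in> E" using e(1) ij(1) R unfolding covering_def by blast
  ultimately have "spans E (M i) (R i - {e}) e" unfolding spanning_def by blast
  moreover have "\<not> spans E (M i) (R i - {e}) e"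
  proof (rule indep_not_spans)
    show "matroid E (M i)" using m ij(1) by blast
    show "M i (R i)" using R ij(1) unfolding covering_def by blast
  qed (use e(1) in auto)
  ultimately show False by contradiction
qed

lemma tight_covering_base:
  assumes m: "\<forall>i \<in> K. matroid E (M i)" and t: "tight E K M" and R: "covering E K M R"
    and i: "i \<in> K"
  shows "base E (M i) (R i)"
proof (rule indep_spanning_imp_base)
  show "matroid E (M i)" using m i by blast
  show "M i (R i)" using R i unfolding covering_def by blast
  show "spanning E (M i) (R i)" using tight_covering_spanning[OF t R i] .
qed

theorem proposition3p3:
  fixes E :: "'a set" and K :: "'k set" and M :: "'k \<Rightarrow> 'a set \<Rightarrow> bool"
    and R :: "'k \<Rightarrow> 'a set"
  assumes "\<forall>i \<in> K. matroid E (M i)"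
    and "tight E K M"
    and "covering E K M R"
  shows "(\<forall>i \<in> K. \<forall>j \<in> K. i \<noteq> j \<longrightarrow> R i \<inter> R j = {})
         \<and> (\<Union>i \<in> K. R i) = E
         \<and> (\<forall>i \<in> K. base E (M i) (R i))"
  using tight_covering_disjoint[OF assms] tight_covering_base[OF assms] assms(3)
  unfolding covering_def by blast

end
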